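(* For every group $H$, the nullification functor $P_H$ in the category of groups is conditionally flat.
   Context: For a group homomorphism $\varphi\colon A\to B$, a group $M$ is $\varphi$-local if $\mathrm{Hom}(B,M)\to\mathrm{Hom}(A,M)$ is a bijection; the localization functor $L_\varphi$ assigns to each group $G$ a $\varphi$-local group $L_\varphi G$ with a natural homomorphism $G\to L_\varphi G$ initial among homomorphisms to $\varphi$-local groups. The nullification $P_H$ is $L_\varphi$ for $\varphi\colon H\to\{e\}$. For a functor $L$ on groups, a group extension $1\to N\to E\to Q\to 1$ is $L$-flat if $1\to LN\to LE\to LQ\to 1$ is again a short exact sequence; $L$ is conditionally flat if for every $L$-flat extension $1\to N\to E\to Q\to 1$ and every homomorphism $Q'\to Q$, the pullback extension $1\to N\to E\times_Q Q'\to Q'\to 1$ is $L$-flat. *)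

theory Defs
  imports "HOL-Algebra.Algebra"
begin

text \<open>A group M is H-null (i.e. local for the map H \<rightarrow> {e}): since Hom({e},M) is a
  singleton, Hom({e},M) \<rightarrow> Hom(H,M) is a bijection iff every homomorphism H \<rightarrow> M
  is trivial.\<close>
definition H_null :: "('h,'c) monoid_scheme \<Rightarrow> ('m,'d) monoid_scheme \<Rightarrow> bool" where
  "H_null H M \<longleftrightarrow> (\<forall>f \<in> hom H M. trivial_homomorphism H M f)"

text \<open>The nullification P_H G, realised as the quotient of G by the smallest normal
  subgroup R with G/R H-null (this quotient, with the projection G \<rightarrow> G/R, is the
  initial map from G to an H-null group).\<close>
definition null_kernel :: "('h,'c) monoid_scheme \<Rightarrow> ('g,'d) monoid_scheme \<Rightarrow> 'g set" where
  "null_kernel H G = \<Inter> {K. K \<lhd> G \<and> H_null H (G Mod K)}"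

definition PH :: "('h,'c) monoid_scheme \<Rightarrow> ('g,'d) monoid_scheme \<Rightarrow> 'g set monoid" where
  "PH H G = G Mod (null_kernel H G)"

definition PH_unit :: "('h,'c) monoid_scheme \<Rightarrow> ('g,'d) monoid_scheme \<Rightarrow> 'g \<Rightarrow> 'g set" where
  "PH_unit H G x = null_kernel H G #>\<^bsub>G\<^esub> x"

definition PH_map :: "('h,'c) monoid_scheme \<Rightarrow> ('a,'d) monoid_scheme \<Rightarrow> ('b,'e) monoid_scheme
    \<Rightarrow> ('a \<Rightarrow> 'b) \<Rightarrow> 'a set \<Rightarrow> 'b set" where
  "PH_map H G1 G2 f C = (f ` C) <#>\<^bsub>G2\<^esub> null_kernel H G2"

definition short_exact ::
  "('n,'a) monoid_scheme \<Rightarrow> ('e,'b) monoid_scheme \<Rightarrow> ('q,'c) monoid_scheme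
     \<Rightarrow> ('n \<Rightarrow> 'e) \<Rightarrow> ('e \<Rightarrow> 'q) \<Rightarrow> bool" where
  "short_exact N E Q i p \<longleftrightarrow>
     i \<in> hom N E \<and> p \<in> hom E Q \<and> inj_on i (carrier N) \<and>
     i ` carrier N = kernel E Q p \<and> p ` carrier E = carrier Q"

definition PH_flat ::
  "('h,'d) monoid_scheme \<Rightarrow> ('n,'a) monoid_scheme \<Rightarrow> ('e,'b) monoid_scheme \<Rightarrow> ('q,'c) monoid_scheme
     \<Rightarrow> ('n \<Rightarrow> 'e) \<Rightarrow> ('e \<Rightarrow> 'q) \<Rightarrow> bool" where
  "PH_flat H N E Q i p \<longleftrightarrow>
     short_exact (PH H N) (PH H E) (PH H Q) (PH_map H N E i) (PH_map H E Q p)"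

definition pullback_grp ::
  "('e,'a) monoid_scheme \<Rightarrow> ('r,'b) monoid_scheme \<Rightarrow> ('e \<Rightarrow> 'q) \<Rightarrow> ('r \<Rightarrow> 'q) \<Rightarrow> ('e \<times> 'r) monoid" where
  "pullback_grp E Q' p g =
     (E \<times>\<times> Q')\<lparr>carrier := {(x, y). x \<in> carrier E \<and> y \<in> carrier Q' \<and> p x = g y}\<rparr>"

end

theory Submission
  imports Defs
begin

text \<open>Write R G for \<^term>\<open>null_kernel H G\<close>: it is the smallest normal subgroup with H-null
  quotient, P_H G = G / R G, and every homomorphism maps R G1 into R G2. For an extension
  N \<rightarrow> E \<rightarrow> Q, P_H-flatness says exactly that i^-1(R E) = R N and R Q = p(R E).
  For the pullback E' of E along g the first condition is inherited through the projection
  to E. For the second, let S be the image of R E' in Q'. The first condition forces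
  R E' = {(x, y) \<in> E'. x \<in> R E, y \<in> S}, so E'/R E' embeds into P_H E \<times> Q'/S. A homomorphism
  H \<rightarrow> Q'/S becomes trivial in P_H Q, so by the second condition for E each of its values c
  has (1, c) in the image of E' in P_H E \<times> Q'/S, which is H-null; hence the homomorphism is trivial. Thus Q'/S
  is H-null and R Q' \<subseteq> S.\<close>

lemma (in group) rcos_eq_rcos_iff:
  assumes "subgroup K G" "x \<in> carrier G" "y \<in> carrier G"
  shows "K #> x = K #> y \<longleftrightarrow> x \<otimes> inv y \<in> K"
proof
  assume "K #> x = K #> y"
  then show "x \<otimes> inv y \<in> K"
    using subgroup.rcos_module_imp[OF assms(1) is_group assms(3)] rcos_self[OF assms(2,1)] by simp
next
  assume "x \<otimes> inv y \<in> K"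
  then have "x \<in> K #> y"
    using subgroup.rcos_module_rev[OF assms(1) is_group assms(3,2)] by blast
  then show "K #> x = K #> y"
    using repr_independence[OF _ assms(3,1)] by simp
qed

lemma (in group) rcos_eq_self_iff:
  assumes "subgroup K G" "x \<in> carrier G"
  shows "K #> x = K \<longleftrightarrow> x \<in> K"
  using assms coset_join1 coset_join2 by blast

lemma H_nullI:
  "(\<And>f a. f \<in> hom H M \<Longrightarrow> a \<in> carrier H \<Longrightarrow> f a = \<one>\<^bsub>M\<^esub>) \<Longrightarrow> H_null H M"
  by (simp add: H_null_def trivial_homomorphism_def)

lemma H_nullD: "H_null H M \<Longrightarrow> f \<in> hom H M \<Longrightarrow> a \<in> carrier H \<Longrightarrow> f a = \<one>\<^bsub>M\<^esub>"
  by (simp add: H_null_def trivial_homomorphism_def)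

lemma H_null_mon:
  assumes "group A" "group M" "\<theta> \<in> mon A M" "H_null H M"
  shows "H_null H A"
proof (rule H_nullI)
  fix f a assume f: "f \<in> hom H A" and a: "a \<in> carrier H"
  have \<theta>: "\<theta> \<in> hom A M" "inj_on \<theta> (carrier A)"
    using assms(3) by (simp_all add: mon_def)
  have "\<theta> (f a) = \<one>\<^bsub>M\<^esub>"
    using H_nullD[OF assms(4) hom_compose[OF f \<theta>(1)] a] by simp
  also have "\<dots> = \<theta> \<one>\<^bsub>A\<^esub>"
    using \<theta>(1) assms(1,2) by (simp add: group_hom.hom_one group_hom_def group_hom_axioms_def)
  finally show "f a = \<one>\<^bsub>A\<^esub>"
    using inj_onD[OF \<theta>(2)] hom_carrier[OF f] a group.is_monoid[OF assms(1)] monoid.one_closed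
    by blast
qed

lemma H_null_iso:
  assumes "group A" "group M" "A \<cong> M" "H_null H A"
  shows "H_null H M"
proof -
  obtain \<theta> where "\<theta> \<in> iso M A"
    using group.iso_sym[OF assms(1,3)] unfolding is_iso_def by blast
  then have "\<theta> \<in> mon M A"
    by (simp add: iso_iff_mon_epi)
  then show ?thesis
    by (rule H_null_mon[OF assms(2,1) _ assms(4)])
qed

lemma H_null_extension:
  assumes "group B" "group C" "\<rho> \<in> hom B C" "H_null H C"
    and "H_null H (B\<lparr>carrier := kernel B C \<rho>\<rparr>)"
  shows "H_null H B"
proof (rule H_nullI)
  fix h a assume h: "h \<in> hom H B" and a: "a \<in> carrier H"
  have "h x \<in> kernel B C \<rho>" if "x \<in> carrier H" for x
    using H_nullD[OF assms(4) hom_compose[OF h assms(3)] that] hom_in_carrier[OF h that]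
    by (simp add: kernel_def)
  then have "h \<in> hom H (B\<lparr>carrier := kernel B C \<rho>\<rparr>)"
    using h by (auto simp: hom_def)
  then show "h a = \<one>\<^bsub>B\<^esub>"
    using H_nullD[OF assms(5) _ a] by simp
qed

lemma null_kernel_minimal:
  "K \<lhd> G \<Longrightarrow> H_null H (G Mod K) \<Longrightarrow> null_kernel H G \<subseteq> K"
  unfolding null_kernel_def by blast

lemma (in group) H_null_Mod_carrier: "H_null H (G Mod carrier G)"
proof (rule H_nullI)
  fix f a assume "f \<in> hom H (G Mod carrier G)" "a \<in> carrier H"
  then have "f a \<in> carrier (G Mod carrier G)"
    using hom_carrier by blast
  then obtain x where "x \<in> carrier G" "f a = carrier G #> x"
    by (auto simp: carrier_FactGroup)
  then show "f a = \<one>\<^bsub>G Mod carrier G\<^esub>"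
    using coset_join2[OF _ subgroup_self] by simp
qed

lemma (in group) normal_null_kernel: "null_kernel H G \<lhd> G"
proof -
  let ?F = "{K. K \<lhd> G \<and> H_null H (G Mod K)}"
  have "carrier G \<in> ?F"
    using H_null_Mod_carrier normal_inv_iff subgroup_self by auto
  then have "subgroup (\<Inter>?F) G"
    by (intro subgroups_Inter) (auto dest: normal_imp_subgroup)
  then show ?thesis
    unfolding null_kernel_def normal_inv_iff by (auto simp: normal_inv_iff)
qed

lemma (in group) subgroup_null_kernel: "subgroup (null_kernel H G) G"
  by (rule normal_imp_subgroup[OF normal_null_kernel])

lemma (in group) H_null_Mod_null_kernel: "H_null H (G Mod null_kernel H G)"
proof (rule H_nullI)
  let ?R = "null_kernel H G"
  fix f a assume f: "f \<in> hom H (G Mod ?R)" and a: "a \<in> carrier H"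
  then have "f a \<in> carrier (G Mod ?R)"
    using hom_carrier by blast
  then obtain x where x: "x \<in> carrier G" "f a = ?R #> x"
    by (auto simp: carrier_FactGroup)
  have "x \<in> K" if K: "K \<lhd> G" "H_null H (G Mod K)" for K
  proof -
    interpret K: normal K G by (fact K(1))
    interpret q: group_hom G "G Mod K" "\<lambda>y. K #> y"
      by (simp add: group_hom_def group_hom_axioms_def K.factorgroup_is_group
          K.r_coset_hom_Mod is_group)
    have "?R \<subseteq> kernel G (G Mod K) (\<lambda>y. K #> y)"
      using null_kernel_minimal[OF K] K.subset rcos_eq_self_iff[OF K.subgroup_axioms]
      unfolding kernel_def by auto
    then obtain \<rho> where \<rho>: "\<rho> \<in> hom (G Mod ?R) (G Mod K)"
      "\<And>y. y \<in> carrier G \<Longrightarrow> \<rho> (?R #> y) = K #> y"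
      using q.FactGroup_universal_kernel[OF normal_null_kernel] by blast
    have "K #> x = K"
      using H_nullD[OF K(2) Group.hom_compose[OF f \<rho>(1)] a] \<rho>(2)[OF x(1)] x(2) by simp
    then show "x \<in> K" using rcos_eq_self_iff[OF K.subgroup_axioms x(1)] by simp
  qed
  then have "x \<in> ?R" unfolding null_kernel_def by blast
  then show "f a = \<one>\<^bsub>G Mod ?R\<^esub>"
    using x rcos_eq_self_iff[OF subgroup_null_kernel[of H]] by simp
qed

lemma null_kernel_subset_kernel:
  assumes "group G" "group M" "\<psi> \<in> hom G M" "H_null H M"
  shows "null_kernel H G \<subseteq> kernel G M \<psi>"
proof -
  interpret group_hom G M \<psi>
    using assms by (simp add: group_hom_def group_hom_axioms_def)
  have "H_null H (G Mod kernel G M \<psi>)"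
    using H_null_mon[OF normal.factorgroup_is_group[OF normal_kernel] assms(2) _ assms(4)]
      FactGroup_hom FactGroup_inj_on
    by (simp add: mon_def)
  then show ?thesis
    using null_kernel_minimal normal_kernel by blast
qed

lemma H_null_hom_image:
  assumes "group G" "group M" "\<psi> \<in> hom G M" "kernel G M \<psi> = null_kernel H G"
  shows "H_null H (M\<lparr>carrier := \<psi> ` carrier G\<rparr>)"
proof -
  interpret group_hom G M \<psi>
    using assms by (simp add: group_hom_def group_hom_axioms_def)
  let ?M' = "M\<lparr>carrier := \<psi> ` carrier G\<rparr>"
  interpret M': group ?M'
    by (rule subgroup.subgroup_is_group[OF img_is_subgroup assms(2)])
  interpret \<psi>': group_hom G ?M' \<psi>
    using assms(3) by (unfold_locales) (auto simp: hom_def)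
  have "G Mod null_kernel H G \<cong> ?M'"
    using \<psi>'.FactGroup_iso assms(4) by (simp add: kernel_def)
  then show ?thesis
    by (rule H_null_iso[OF normal.factorgroup_is_group[OF G.normal_null_kernel]
          M'.is_group _ G.H_null_Mod_null_kernel])
qed

lemma PH_carrier: "carrier (PH H G) = PH_unit H G ` carrier G"
  by (simp add: PH_def PH_unit_def carrier_FactGroup)

context group
begin

lemma group_PH: "group (PH H G)"
  unfolding PH_def by (rule normal.factorgroup_is_group[OF normal_null_kernel])

lemma H_null_PH: "H_null H (PH H G)"
  unfolding PH_def by (rule H_null_Mod_null_kernel)

lemma PH_unit_hom: "PH_unit H G \<in> hom G (PH H G)"
  unfolding PH_def PH_unit_def by (rule normal.r_coset_hom_Mod[OF normal_null_kernel])

lemma PH_unit_eq_iff: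
  "x \<in> carrier G \<Longrightarrow> y \<in> carrier G \<Longrightarrow>
    PH_unit H G x = PH_unit H G y \<longleftrightarrow> x \<otimes> inv y \<in> null_kernel H G"
  unfolding PH_unit_def
  by (rule rcos_eq_rcos_iff[OF subgroup_null_kernel])

lemma PH_unit_eq_one_iff:
  "x \<in> carrier G \<Longrightarrow> PH_unit H G x = \<one>\<^bsub>PH H G\<^esub> \<longleftrightarrow> x \<in> null_kernel H G"
  unfolding PH_unit_def PH_def
  by (simp add: rcos_eq_self_iff[OF subgroup_null_kernel])

end

lemma null_kernel_image_subset:
  assumes "group G1" "group G2" "f \<in> hom G1 G2"
  shows "f ` null_kernel H G1 \<subseteq> null_kernel H G2"
proof -
  interpret G2: group G2 by fact
  have "null_kernel H G1 \<subseteq> kernel G1 (PH H G2) (PH_unit H G2 \<circ> f)"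
    using null_kernel_subset_kernel[OF assms(1) G2.group_PH _ G2.H_null_PH]
      hom_compose[OF assms(3) G2.PH_unit_hom] by blast
  then have "PH_unit H G2 (f x) = \<one>\<^bsub>PH H G2\<^esub>" "x \<in> carrier G1"
    if "x \<in> null_kernel H G1" for x
    using that by (auto simp: kernel_def)
  then show ?thesis
    using G2.PH_unit_eq_one_iff hom_carrier[OF assms(3)] by blast
qed

lemma PH_map_PH_unit:
  assumes "group G1" "group G2" "f \<in> hom G1 G2" "x \<in> carrier G1"
  shows "PH_map H G1 G2 f (PH_unit H G1 x) = PH_unit H G2 (f x)"
proof -
  interpret G1: group G1 by fact
  interpret G2: group G2 by fact
  let ?R1 = "null_kernel H G1" and ?R2 = "null_kernel H G2"
  interpret R2: normal ?R2 G2 by (rule G2.normal_null_kernel)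
  have R1: "?R1 \<subseteq> carrier G1"
    using subgroup.subset[OF G1.subgroup_null_kernel] .
  have fx: "f x \<in> carrier G2"
    using assms(3,4) hom_carrier by blast
  \<comment> \<open>f maps the coset R1 x into R2 (f x) and hits f x, so multiplying by R2 gives R2 (f x).\<close>
  have image: "f ` (?R1 #>\<^bsub>G1\<^esub> x) \<subseteq> ?R2 #>\<^bsub>G2\<^esub> f x"
    using null_kernel_image_subset[OF assms(1-3)] R1 assms(3,4)
    by (force simp: r_coset_def hom_mult)
  have "f x \<in> f ` (?R1 #>\<^bsub>G1\<^esub> x)"
    using G1.rcos_self[OF assms(4) G1.subgroup_null_kernel] by blast
  then have "?R2 #>\<^bsub>G2\<^esub> f x \<subseteq> f ` (?R1 #>\<^bsub>G1\<^esub> x) <#>\<^bsub>G2\<^esub> ?R2"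
    using R2.coset_eq fx mono_set_mult[of "{f x}" _ ?R2 ?R2 G2]
    by (simp add: l_coset_eq_set_mult)
  moreover have "f ` (?R1 #>\<^bsub>G1\<^esub> x) <#>\<^bsub>G2\<^esub> ?R2 \<subseteq> ?R2 #>\<^bsub>G2\<^esub> f x"
    using mono_set_mult[OF image subset_refl, of G2 ?R2] R2.rcos_sum[OF fx G2.one_closed]
      G2.coset_mult_one[OF R2.subset] fx
    by simp
  ultimately show ?thesis
    unfolding PH_map_def PH_unit_def by blast
qed

lemma PH_map_hom:
  assumes "group G1" "group G2" "f \<in> hom G1 G2"
  shows "PH_map H G1 G2 f \<in> hom (PH H G1) (PH H G2)"
proof -
  interpret G1: group G1 by fact
  interpret G2: group G2 by fact
  have unit: "PH_map H G1 G2 f (PH_unit H G1 x) = PH_unit H G2 (f x)" if "x \<in> carrier G1" for x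
    by (rule PH_map_PH_unit[OF assms that])
  show ?thesis
  proof (rule homI)
    fix C assume "C \<in> carrier (PH H G1)"
    then obtain x where "x \<in> carrier G1" "C = PH_unit H G1 x"
      by (auto simp: PH_carrier)
    then show "PH_map H G1 G2 f C \<in> carrier (PH H G2)"
      using unit hom_carrier[OF assms(3)] by (auto simp: PH_carrier)
  next
    fix C D assume "C \<in> carrier (PH H G1)" "D \<in> carrier (PH H G1)"
    then obtain x y where x: "x \<in> carrier G1" "C = PH_unit H G1 x"
      and y: "y \<in> carrier G1" "D = PH_unit H G1 y"
      by (auto simp: PH_carrier)
    have "C \<otimes>\<^bsub>PH H G1\<^esub> D = PH_unit H G1 (x \<otimes>\<^bsub>G1\<^esub> y)"
      using x y hom_mult[OF G1.PH_unit_hom[of H]] by simp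
    then have "PH_map H G1 G2 f (C \<otimes>\<^bsub>PH H G1\<^esub> D) = PH_unit H G2 (f (x \<otimes>\<^bsub>G1\<^esub> y))"
      using x y unit by simp
    also have "\<dots> = PH_unit H G2 (f x) \<otimes>\<^bsub>PH H G2\<^esub> PH_unit H G2 (f y)"
      using x y hom_mult[OF assms(3)] hom_mult[OF G2.PH_unit_hom[of H]] hom_in_carrier[OF assms(3)]
      by simp
    finally show "PH_map H G1 G2 f (C \<otimes>\<^bsub>PH H G1\<^esub> D) =
        PH_map H G1 G2 f C \<otimes>\<^bsub>PH H G2\<^esub> PH_map H G1 G2 f D"
      using x y unit by simp
  qed
qed

lemma PH_map_inj_on_iff:
  assumes "group N" "group E" "i \<in> hom N E"
  shows "inj_on (PH_map H N E i) (carrier (PH H N)) \<longleftrightarrow>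
    (\<forall>n \<in> carrier N. i n \<in> null_kernel H E \<longrightarrow> n \<in> null_kernel H N)"
proof -
  interpret N: group N by fact
  interpret E: group E by fact
  interpret group_hom "PH H N" "PH H E" "PH_map H N E i"
    using N.group_PH[of H] E.group_PH[of H] PH_map_hom[OF assms, of H]
    by (simp add: group_hom_def group_hom_axioms_def)
  have "inj_on (PH_map H N E i) (carrier (PH H N)) \<longleftrightarrow>
    (\<forall>C. C \<in> carrier (PH H N) \<longrightarrow> PH_map H N E i C = \<one>\<^bsub>PH H E\<^esub> \<longrightarrow> C = \<one>\<^bsub>PH H N\<^esub>)"
    by (rule inj_on_one_iff)
  also have "\<dots> \<longleftrightarrow> (\<forall>n \<in> carrier N. PH_unit H E (i n) = \<one>\<^bsub>PH H E\<^esub> \<longrightarrow>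
      PH_unit H N n = \<one>\<^bsub>PH H N\<^esub>)"
    using PH_map_PH_unit[OF assms, where H=H] by (auto simp: PH_carrier)
  finally show ?thesis
    using N.PH_unit_eq_one_iff[of _ H] E.PH_unit_eq_one_iff[of _ H] hom_in_carrier[OF assms(3)]
    by auto
qed

lemma PH_map_surj:
  assumes "group E" "group Q" "p \<in> hom E Q" "p ` carrier E = carrier Q"
  shows "PH_map H E Q p ` carrier (PH H E) = carrier (PH H Q)"
proof -
  have "(PH_map H E Q p \<circ> PH_unit H E) ` carrier E = (PH_unit H Q \<circ> p) ` carrier E"
    using PH_map_PH_unit[OF assms(1-3), where H=H] by (auto intro: image_cong)
  then show ?thesis
    unfolding image_comp[symmetric] PH_carrier assms(4) .
qed

lemma PH_unit_mem_image_kernel_iff: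
  assumes "group E" "group Q" "p \<in> hom E Q" "x \<in> carrier E"
  shows "PH_unit H E x \<in> PH_unit H E ` kernel E Q p \<longleftrightarrow> p x \<in> p ` null_kernel H E"
proof -
  interpret group_hom E Q p
    using assms by (simp add: group_hom_def group_hom_axioms_def)
  have RE: "null_kernel H E \<subseteq> carrier E"
    using subgroup.subset[OF G.subgroup_null_kernel] .
  show ?thesis
  proof
    assume "PH_unit H E x \<in> PH_unit H E ` kernel E Q p"
    then obtain k where k: "k \<in> carrier E" "p k = \<one>\<^bsub>Q\<^esub>" "PH_unit H E x = PH_unit H E k"
      by (auto simp: kernel_def)
    then have "x \<otimes>\<^bsub>E\<^esub> inv\<^bsub>E\<^esub> k \<in> null_kernel H E"
      using G.PH_unit_eq_iff[of x k H] assms(4) by blast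
    moreover have "p (x \<otimes>\<^bsub>E\<^esub> inv\<^bsub>E\<^esub> k) = p x"
      using k assms(4) by simp
    ultimately show "p x \<in> p ` null_kernel H E"
      by (metis image_eqI)
  next
    assume "p x \<in> p ` null_kernel H E"
    then obtain e where e: "e \<in> null_kernel H E" "p e = p x"
      by auto
    with RE have "e \<in> carrier E" by blast
    define k where "k = inv\<^bsub>E\<^esub> e \<otimes>\<^bsub>E\<^esub> x"
    have "k \<in> kernel E Q p"
      using e \<open>e \<in> carrier E\<close> assms(4) by (simp add: k_def kernel_def)
    moreover have "x \<otimes>\<^bsub>E\<^esub> inv\<^bsub>E\<^esub> k = e"
      using \<open>e \<in> carrier E\<close> assms(4) by (simp add: k_def G.inv_mult_group flip: G.m_assoc)
    ultimately show "PH_unit H E x \<in> PH_unit H E ` kernel E Q p"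
      using G.PH_unit_eq_iff[of x k H] e(1) assms(4) by (auto simp: kernel_def)
  qed
qed

lemma subsets_image_eq_iff:
  "S \<subseteq> f ` U \<Longrightarrow> T \<subseteq> f ` U \<Longrightarrow> S = T \<longleftrightarrow> (\<forall>u \<in> U. f u \<in> S \<longleftrightarrow> f u \<in> T)"
  by blast

lemma PH_map_image_eq_kernel_iff:
  assumes "group N" "group E" "group Q" "short_exact N E Q i p"
  shows "PH_map H N E i ` carrier (PH H N) = kernel (PH H E) (PH H Q) (PH_map H E Q p) \<longleftrightarrow>
    null_kernel H Q \<subseteq> p ` null_kernel H E"
proof -
  interpret E: group E by fact
  interpret Q: group Q by fact
  have i_hom: "i \<in> hom N E" and i_image: "i ` carrier N = kernel E Q p"
    and p_hom: "p \<in> hom E Q" and p_surj: "p ` carrier E = carrier Q"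
    using assms(4) by (auto simp: short_exact_def)
  have image: "PH_map H N E i ` carrier (PH H N) = PH_unit H E ` kernel E Q p"
    using PH_map_PH_unit[OF assms(1,2) i_hom, where H=H]
    by (simp add: PH_carrier image_image flip: i_image cong: image_cong)
  have in_kernel: "PH_unit H E x \<in> kernel (PH H E) (PH H Q) (PH_map H E Q p) \<longleftrightarrow>
      p x \<in> null_kernel H Q" if "x \<in> carrier E" for x
    using that PH_map_PH_unit[OF assms(2,3) p_hom that, where H=H]
      Q.PH_unit_eq_one_iff[of "p x" H] hom_in_carrier[OF p_hom]
    by (auto simp: kernel_def PH_carrier)
  have subsets: "PH_unit H E ` kernel E Q p \<subseteq> PH_unit H E ` carrier E"
    "kernel (PH H E) (PH H Q) (PH_map H E Q p) \<subseteq> PH_unit H E ` carrier E"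
    by (auto simp: PH_carrier kernel_def)
  have "PH_map H N E i ` carrier (PH H N) = kernel (PH H E) (PH H Q) (PH_map H E Q p) \<longleftrightarrow>
      (\<forall>x \<in> carrier E. PH_unit H E x \<in> PH_unit H E ` kernel E Q p \<longleftrightarrow>
        PH_unit H E x \<in> kernel (PH H E) (PH H Q) (PH_map H E Q p))"
    unfolding image by (rule subsets_image_eq_iff[OF subsets])
  also have "\<dots> \<longleftrightarrow> (\<forall>x \<in> carrier E. p x \<in> p ` null_kernel H E \<longleftrightarrow> p x \<in> null_kernel H Q)"
    using PH_unit_mem_image_kernel_iff[OF assms(2,3) p_hom, where H=H] in_kernel by simp
  also have "\<dots> \<longleftrightarrow> null_kernel H Q \<subseteq> p ` null_kernel H E"
    using null_kernel_image_subset[OF assms(2,3) p_hom, of H] subgroup.subset[OF Q.subgroup_null_kernel]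
    unfolding p_surj[symmetric] by blast
  finally show ?thesis .
qed

lemma PH_flat_iff:
  assumes "group N" "group E" "group Q" "short_exact N E Q i p"
  shows "PH_flat H N E Q i p \<longleftrightarrow>
    (\<forall>n \<in> carrier N. i n \<in> null_kernel H E \<longrightarrow> n \<in> null_kernel H N) \<and>
    null_kernel H Q \<subseteq> p ` null_kernel H E"
proof -
  have "i \<in> hom N E" "p \<in> hom E Q" "p ` carrier E = carrier Q"
    using assms(4) by (auto simp: short_exact_def)
  then show ?thesis
    unfolding PH_flat_def short_exact_def
    using PH_map_hom[OF assms(1,2), of i H] PH_map_hom[OF assms(2,3), of p H]
      PH_map_inj_on_iff[OF assms(1,2), of i H] PH_map_image_eq_kernel_iff[OF assms, of H]
      PH_map_surj[OF assms(2,3), of p H]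
    by blast
qed

locale extension_pullback =
  fixes N :: "('n, 'a) monoid_scheme" and E :: "('e, 'b) monoid_scheme"
    and Q :: "('q, 'c) monoid_scheme" and Q' :: "('r, 'd) monoid_scheme"
    and i :: "'n \<Rightarrow> 'e" and p :: "'e \<Rightarrow> 'q" and g :: "'r \<Rightarrow> 'q"
  assumes group_N: "group N" and group_E: "group E" and group_Q: "group Q"
    and group_Q': "group Q'" and exact: "short_exact N E Q i p" and g_hom: "g \<in> hom Q' Q"
begin

abbreviation P :: "('e \<times> 'r) monoid" where
  "P \<equiv> pullback_grp E Q' p g"

lemma i_hom: "i \<in> hom N E" and i_inj: "inj_on i (carrier N)"
  and i_image: "i ` carrier N = kernel E Q p"
  and p_hom: "p \<in> hom E Q" and p_surj: "p ` carrier E = carrier Q"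
  using exact by (auto simp: short_exact_def)

sublocale E: group E by (fact group_E)
sublocale Q: group Q by (fact group_Q)
sublocale Q': group Q' by (fact group_Q')
sublocale p: group_hom E Q p
  by (simp add: group_hom_def group_hom_axioms_def group_E group_Q p_hom)
sublocale g: group_hom Q' Q g
  by (simp add: group_hom_def group_hom_axioms_def group_Q group_Q' g_hom)

lemma carrier_P: "carrier P = {(x, y). x \<in> carrier E \<and> y \<in> carrier Q' \<and> p x = g y}"
  by (simp add: pullback_grp_def)

lemma mult_P: "z \<otimes>\<^bsub>P\<^esub> w = (fst z \<otimes>\<^bsub>E\<^esub> fst w, snd z \<otimes>\<^bsub>Q'\<^esub> snd w)"
  by (simp add: pullback_grp_def mult_DirProd')

lemma subgroup_pullback: "subgroup (carrier P) (E \<times>\<times> Q')"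
proof (rule group.subgroupI[OF DirProd_group[OF group_E group_Q']])
  have "(\<one>\<^bsub>E\<^esub>, \<one>\<^bsub>Q'\<^esub>) \<in> carrier P"
    by (simp add: carrier_P)
  then show "carrier P \<noteq> {}"
    by blast
qed (auto simp: carrier_P)

lemma group_P: "group P"
  using subgroup.subgroup_is_group[OF subgroup_pullback DirProd_group[OF group_E group_Q']]
  by (simp add: pullback_grp_def)

sublocale P: group P by (rule group_P)

lemma fst_hom: "fst \<in> hom P E"
  by (rule homI) (auto simp: carrier_P mult_P)

lemma snd_hom: "snd \<in> hom P Q'"
  by (rule homI) (auto simp: carrier_P mult_P)

lemma snd_surj: "snd ` carrier P = carrier Q'"
proof
  show "carrier Q' \<subseteq> snd ` carrier P"
  proof
    fix y assume y: "y \<in> carrier Q'"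
    then obtain x where "x \<in> carrier E" "p x = g y"
      using p_surj by (metis g.hom_closed imageE)
    with y show "y \<in> snd ` carrier P"
      by (force simp: carrier_P)
  qed
qed (auto simp: carrier_P)

lemma short_exact_pullback: "short_exact N P Q' (\<lambda>n. (i n, \<one>\<^bsub>Q'\<^esub>)) snd"
proof -
  have "i n \<in> kernel E Q p" if "n \<in> carrier N" for n
    using i_image that by blast
  then have "(\<lambda>n. (i n, \<one>\<^bsub>Q'\<^esub>)) \<in> hom N P"
    using hom_mult[OF i_hom] by (intro homI) (auto simp: carrier_P mult_P kernel_def)
  moreover have "kernel P Q' snd = (\<lambda>x. (x, \<one>\<^bsub>Q'\<^esub>)) ` kernel E Q p"
    by (auto simp: kernel_def carrier_P)
  then have "(\<lambda>n. (i n, \<one>\<^bsub>Q'\<^esub>)) ` carrier N = kernel P Q' snd"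
    by (simp add: image_image flip: i_image)
  moreover have "inj_on (\<lambda>n. (i n, \<one>\<^bsub>Q'\<^esub>)) (carrier N)"
    using i_inj by (auto simp: inj_on_def)
  ultimately show ?thesis
    using snd_hom snd_surj by (simp add: short_exact_def)
qed

lemma null_kernel_pullback:
  assumes flat_inj: "\<forall>n \<in> carrier N. i n \<in> null_kernel H E \<longrightarrow> n \<in> null_kernel H N"
  shows "null_kernel H P =
    {z \<in> carrier P. fst z \<in> null_kernel H E \<and> snd z \<in> snd ` null_kernel H P}"
proof (intro equalityI subsetI)
  fix z assume "z \<in> null_kernel H P"
  then show "z \<in> {z \<in> carrier P. fst z \<in> null_kernel H E \<and> snd z \<in> snd ` null_kernel H P}"
    using null_kernel_image_subset[OF group_P group_E fst_hom, of H] subgroup.subset[OF P.subgroup_null_kernel]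
    by blast
next
  fix z assume "z \<in> {z \<in> carrier P. fst z \<in> null_kernel H E \<and> snd z \<in> snd ` null_kernel H P}"
  then obtain x y e where z: "z = (x, y)" "(x, y) \<in> carrier P" "x \<in> null_kernel H E"
    and e: "(e, y) \<in> null_kernel H P"
    by force
  have "(e, y) \<in> carrier P" "e \<in> null_kernel H E"
    using e subgroup.subset[OF P.subgroup_null_kernel] null_kernel_image_subset[OF group_P group_E fst_hom, of H]
    by force+
  with z have xe: "x \<in> carrier E" "e \<in> carrier E" "p x = p e"
    by (auto simp: carrier_P)
  define d where "d = x \<otimes>\<^bsub>E\<^esub> inv\<^bsub>E\<^esub> e"
  have "d \<in> i ` carrier N"
    using xe unfolding i_image by (simp add: d_def kernel_def)
  then obtain n where n: "n \<in> carrier N" "i n = d"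
    by blast
  have "d \<in> null_kernel H E"
    unfolding d_def
    by (rule subgroup.m_closed[OF E.subgroup_null_kernel z(3)
          subgroup.m_inv_closed[OF E.subgroup_null_kernel \<open>e \<in> null_kernel H E\<close>]])
  with n flat_inj have "n \<in> null_kernel H N"
    by blast
  moreover have "(\<lambda>n. (i n, \<one>\<^bsub>Q'\<^esub>)) \<in> hom N P"
    using short_exact_pullback by (simp add: short_exact_def)
  ultimately have "(i n, \<one>\<^bsub>Q'\<^esub>) \<in> null_kernel H P"
    using null_kernel_image_subset[OF group_N group_P, of _ H] by blast
  then have "(i n, \<one>\<^bsub>Q'\<^esub>) \<otimes>\<^bsub>P\<^esub> (e, y) \<in> null_kernel H P"
    using e by (simp add: subgroup.m_closed[OF P.subgroup_null_kernel])
  moreover have "(i n, \<one>\<^bsub>Q'\<^esub>) \<otimes>\<^bsub>P\<^esub> (e, y) = z"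
    using z xe n(2) by (auto simp: mult_P d_def carrier_P E.m_assoc)
  ultimately show "z \<in> null_kernel H P"
    by simp
qed

lemma normal_snd_null_kernel: "snd ` null_kernel H P \<lhd> Q'"
  by (rule normal.surj_hom_normal_subgroup[OF P.normal_null_kernel _ snd_surj])
    (simp add: group_hom_def group_hom_axioms_def group_P group_Q' snd_hom)

definition comparison :: "('h, 'x) monoid_scheme \<Rightarrow> 'e \<times> 'r \<Rightarrow> 'e set \<times> 'r set" where
  "comparison H z = (PH_unit H E (fst z), snd ` null_kernel H P #>\<^bsub>Q'\<^esub> snd z)"

lemma comparison_hom:
  "comparison H \<in> hom P (PH H E \<times>\<times> (Q' Mod snd ` null_kernel H P))"
proof -
  interpret S: normal "snd ` null_kernel H P" Q' by (rule normal_snd_null_kernel)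
  show ?thesis
    unfolding hom_pairwise comparison_def
    using hom_compose[OF fst_hom E.PH_unit_hom] hom_compose[OF snd_hom S.r_coset_hom_Mod]
    by (simp add: comp_def)
qed

lemma H_null_comparison_image:
  assumes flat_inj: "\<forall>n \<in> carrier N. i n \<in> null_kernel H E \<longrightarrow> n \<in> null_kernel H N"
  shows "H_null H ((PH H E \<times>\<times> (Q' Mod snd ` null_kernel H P))
    \<lparr>carrier := comparison H ` carrier P\<rparr>)"
proof -
  interpret S: normal "snd ` null_kernel H P" Q' by (rule normal_snd_null_kernel)
  have "comparison H z = \<one>\<^bsub>PH H E \<times>\<times> (Q' Mod snd ` null_kernel H P)\<^esub> \<longleftrightarrow>
      fst z \<in> null_kernel H E \<and> snd z \<in> snd ` null_kernel H P" if "z \<in> carrier P" for z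
  proof -
    have "fst z \<in> carrier E" "snd z \<in> carrier Q'"
      using that by (auto simp: carrier_P)
    then show ?thesis
      by (simp add: comparison_def E.PH_unit_eq_one_iff Q'.rcos_eq_self_iff[OF S.subgroup_axioms])
  qed
  then have "kernel P (PH H E \<times>\<times> (Q' Mod snd ` null_kernel H P)) (comparison H) =
      {z \<in> carrier P. fst z \<in> null_kernel H E \<and> snd z \<in> snd ` null_kernel H P}"
    by (auto simp: kernel_def)
  also have "\<dots> = null_kernel H P"
    using null_kernel_pullback[OF flat_inj] by simp
  finally show ?thesis
    by (rule H_null_hom_image[OF group_P DirProd_group[OF E.group_PH S.factorgroup_is_group]
          comparison_hom])
qed

lemma g_snd_null_kernel_subset: "g ` snd ` null_kernel H P \<subseteq> null_kernel H Q"
proof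
  fix q assume "q \<in> g ` snd ` null_kernel H P"
  then obtain x y where xy: "(x, y) \<in> null_kernel H P" "q = g y"
    by force
  then have "p x = q" "x \<in> null_kernel H E"
    using subgroup.subset[OF P.subgroup_null_kernel] null_kernel_image_subset[OF group_P group_E fst_hom, of H]
    by (force simp: carrier_P)+
  then show "q \<in> null_kernel H Q"
    using null_kernel_image_subset[OF group_E group_Q p_hom, of H] by blast
qed

lemma induced_hom_Mod_snd_null_kernel:
  obtains \<rho> where "\<rho> \<in> hom (Q' Mod snd ` null_kernel H P) (PH H Q)"
    "\<And>y. y \<in> carrier Q' \<Longrightarrow> \<rho> (snd ` null_kernel H P #>\<^bsub>Q'\<^esub> y) = PH_unit H Q (g y)"
proof -
  let ?S = "snd ` null_kernel H P"
  interpret S: normal ?S Q' by (rule normal_snd_null_kernel)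
  interpret g': group_hom Q' "PH H Q" "PH_unit H Q \<circ> g"
    using hom_compose[OF g_hom Q.PH_unit_hom[of H]] Q.group_PH[of H]
    by (simp add: group_hom_def group_hom_axioms_def group_Q')
  have "?S \<subseteq> kernel Q' (PH H Q) (PH_unit H Q \<circ> g)"
  proof
    fix y assume "y \<in> ?S"
    then have "y \<in> carrier Q'" "g y \<in> null_kernel H Q"
      using S.subset g_snd_null_kernel_subset[of H] by blast+
    then show "y \<in> kernel Q' (PH H Q) (PH_unit H Q \<circ> g)"
      using Q.PH_unit_eq_one_iff[of "g y" H] by (simp add: kernel_def)
  qed
  then show thesis
    using g'.FactGroup_universal_kernel[OF S.normal_axioms] that by auto
qed

lemma comparison_image_lift:
  assumes flat_lift: "null_kernel H Q \<subseteq> p ` null_kernel H E"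
    and y: "y \<in> carrier Q'" "g y \<in> null_kernel H Q"
  shows "(\<one>\<^bsub>PH H E\<^esub>, snd ` null_kernel H P #>\<^bsub>Q'\<^esub> y) \<in> comparison H ` carrier P"
proof -
  obtain x where x: "x \<in> null_kernel H E" "p x = g y"
    using flat_lift y(2) by (metis imageE subsetD)
  then have "x \<in> carrier E"
    using subgroup.subset[OF E.subgroup_null_kernel] by blast
  with x y(1) have "(x, y) \<in> carrier P" "comparison H (x, y) = (\<one>\<^bsub>PH H E\<^esub>, snd ` null_kernel H P #>\<^bsub>Q'\<^esub> y)"
    using E.PH_unit_eq_one_iff[of _ H] by (auto simp: carrier_P comparison_def)
  then show ?thesis
    by (metis image_eqI)
qed

lemma H_null_Mod_snd_null_kernel:
  assumes flat_inj: "\<forall>n \<in> carrier N. i n \<in> null_kernel H E \<longrightarrow> n \<in> null_kernel H N"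
    and flat_lift: "null_kernel H Q \<subseteq> p ` null_kernel H E"
  shows "H_null H (Q' Mod snd ` null_kernel H P)"
proof -
  let ?S = "snd ` null_kernel H P"
  let ?M = "(PH H E \<times>\<times> (Q' Mod ?S))\<lparr>carrier := comparison H ` carrier P\<rparr>"
  interpret S: normal ?S Q' by (rule normal_snd_null_kernel)
  have comparison: "group_hom P (PH H E \<times>\<times> (Q' Mod ?S)) (comparison H)"
    using comparison_hom[of H] DirProd_group[OF E.group_PH[of H] S.factorgroup_is_group]
    by (simp add: group_hom_def group_hom_axioms_def group_P)
  interpret M: group ?M
    using subgroup.subgroup_is_group[OF group_hom.img_is_subgroup[OF comparison]] comparison
    by (simp add: group_hom_def)
  obtain \<rho> where \<rho>: "\<rho> \<in> hom (Q' Mod ?S) (PH H Q)"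
    "\<And>y. y \<in> carrier Q' \<Longrightarrow> \<rho> (?S #>\<^bsub>Q'\<^esub> y) = PH_unit H Q (g y)"
    using induced_hom_Mod_snd_null_kernel[where H=H] by blast
  interpret \<rho>: group_hom "Q' Mod ?S" "PH H Q" \<rho>
    using \<rho>(1) Q.group_PH[of H] S.factorgroup_is_group by (simp add: group_hom_def group_hom_axioms_def)
  let ?K = "(Q' Mod ?S)\<lparr>carrier := kernel (Q' Mod ?S) (PH H Q) \<rho>\<rparr>"
  have lift: "(\<one>\<^bsub>PH H E\<^esub>, c) \<in> carrier ?M" if "c \<in> carrier ?K" for c
  proof -
    have c: "c \<in> carrier (Q' Mod ?S)" "\<rho> c = \<one>\<^bsub>PH H Q\<^esub>"
      using that by (simp_all add: kernel_def)
    then obtain y where y: "y \<in> carrier Q'" "c = ?S #>\<^bsub>Q'\<^esub> y"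
      by (auto simp: carrier_FactGroup)
    with c(2) have "g y \<in> null_kernel H Q"
      using \<rho>(2) Q.PH_unit_eq_one_iff[of _ H] by simp
    then show ?thesis
      using comparison_image_lift[OF flat_lift y(1)] y(2) by simp
  qed
  interpret PH_E: group "PH H E" by (rule E.group_PH)
  have "(\<lambda>c. (\<one>\<^bsub>PH H E\<^esub>, c)) \<in> hom ?K ?M"
    using lift by (intro homI) simp_all
  then have "(\<lambda>c. (\<one>\<^bsub>PH H E\<^esub>, c)) \<in> mon ?K ?M"
    by (simp add: mon_def inj_on_def)
  then have "H_null H ?K"
    using H_null_mon[OF subgroup.subgroup_is_group[OF \<rho>.subgroup_kernel S.factorgroup_is_group]
        M.is_group _ H_null_comparison_image[OF flat_inj]]
    by blast
  then show ?thesis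
    by (rule H_null_extension[OF S.factorgroup_is_group Q.group_PH[of H] \<rho>(1) Q.H_null_PH[of H]])
qed

lemma null_kernel_subset_snd_null_kernel:
  assumes "\<forall>n \<in> carrier N. i n \<in> null_kernel H E \<longrightarrow> n \<in> null_kernel H N"
    and "null_kernel H Q \<subseteq> p ` null_kernel H E"
  shows "null_kernel H Q' \<subseteq> snd ` null_kernel H P"
  by (rule null_kernel_minimal[OF normal_snd_null_kernel H_null_Mod_snd_null_kernel[OF assms]])

lemma PH_flat_pullback:
  assumes "PH_flat H N E Q i p"
  shows "PH_flat H N P Q' (\<lambda>n. (i n, \<one>\<^bsub>Q'\<^esub>)) snd"
proof -
  have inj: "\<forall>n \<in> carrier N. i n \<in> null_kernel H E \<longrightarrow> n \<in> null_kernel H N"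
    and lift: "null_kernel H Q \<subseteq> p ` null_kernel H E"
    using assms PH_flat_iff[OF group_N group_E group_Q exact] by auto
  have "\<forall>n \<in> carrier N. (i n, \<one>\<^bsub>Q'\<^esub>) \<in> null_kernel H P \<longrightarrow> n \<in> null_kernel H N"
    using inj null_kernel_image_subset[OF group_P group_E fst_hom, of H] by force
  then show ?thesis
    using PH_flat_iff[OF group_N group_P group_Q' short_exact_pullback, of H]
      null_kernel_subset_snd_null_kernel[OF inj lift]
    by simp
qed

end

theorem theorem3p2:
  fixes H :: "'h monoid" and N :: "'n monoid" and E :: "'e monoid" and Q :: "'q monoid"
    and Q' :: "'r monoid"
    and i :: "'n \<Rightarrow> 'e" and p :: "'e \<Rightarrow> 'q" and g :: "'r \<Rightarrow> 'q"
  assumes "group H" and "group N" and "group E" and "group Q" and "group Q'"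
    and "short_exact N E Q i p"
    and "PH_flat H N E Q i p"
    and "g \<in> hom Q' Q"
  shows "PH_flat H N (pullback_grp E Q' p g) Q' (\<lambda>n. (i n, \<one>\<^bsub>Q'\<^esub>)) snd"
proof -
  interpret extension_pullback N E Q Q' i p g
    using assms(2-6,8) by (rule extension_pullback.intro)
  show ?thesis
    using PH_flat_pullback[OF assms(7)] .
qed

end
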